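(* Let $(w_{ij})_{i,j=1}^N$ be a nonnegative weight matrix with $w_{ii}=0$ defining a strongly connected directed graph on $N=N_{\mathrm{G}}+N_{\mathrm{R}}$ vertices, each vertex colored green or red with $N_{\mathrm{G}}$ green and $N_{\mathrm{R}}$ red vertices. Assume: (i) $w_{ij}=0$ whenever $i,j$ have the same color; (ii) every green vertex has in-degree $\sum_j w_{ji}=w^{\mathrm{in}}_{\mathrm{G}}$ and out-degree $\sum_j w_{ij}=w^{\mathrm{out}}_{\mathrm{G}}$, and every red vertex has in-degree $w^{\mathrm{in}}_{\mathrm{R}}$ and out-degree $w^{\mathrm{out}}_{\mathrm{R}}$, all positive; (iii) for every green $i$ and red $j$, $w_{ji}=\frac{w^{\mathrm{in}}_{\mathrm{G}}}{w^{\mathrm{out}}_{\mathrm{G}}}\,w_{ij}$. Let $a_{\mathrm{G}},a_{\mathrm{R}},b_{\mathrm{G}},b_{\mathrm{R}}>0$ and set $$\zeta_{\mathrm{G}}=\frac{b_{\mathrm{R}}w^{\mathrm{in}}_{\mathrm{G}}(a_{\mathrm{R}}w^{\mathrm{out}}_{\mathrm{R}}+b_{\mathrm{G}}w^{\mathrm{in}}_{\mathrm{R}})}{a_{\mathrm{R}}w^{\mathrm{out}}_{\mathrm{R}}(a_{\mathrm{G}}w^{\mathrm{out}}_{\mathrm{G}}+b_{\mathrm{R}}w^{\mathrm{in}}_{\mathrm{G}})},\qquad \zeta_{\mathrm{R}}=\frac{b_{\mathrm{G}}w^{\mathrm{in}}_{\mathrm{R}}(a_{\mathrm{G}}w^{\mathrm{out}}_{\mathrm{G}}+b_{\mathrm{R}}w^{\mathrm{in}}_{\mathrm{G}})}{a_{\mathrm{G}}w^{\mathrm{out}}_{\mathrm{G}}(a_{\mathrm{R}}w^{\mathrm{out}}_{\mathrm{R}}+b_{\mathrm{G}}w^{\mathrm{in}}_{\mathrm{R}})},$$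 and for a state $\mathbf{x}\in\{0,1\}^N$ let $\zeta_i=\zeta_{\mathrm{G}}$ if $i$ is green and $\zeta_i=\zeta_{\mathrm{R}}$ if $i$ is red. Then $\prod_i\zeta_i^{X_n(i)}$ is a martingale for the process $X_n$, and, provided $\zeta_{\mathrm{G}}^{N_{\mathrm{G}}}\zeta_{\mathrm{R}}^{N_{\mathrm{R}}}\neq1$, the fixation probability of $A$ from initial state $\mathbf{x}$ is $$\rho_A(\mathbf{x})=\frac{1-\prod_{i=1}^N\zeta_i^{x_i}}{1-\zeta_{\mathrm{G}}^{N_{\mathrm{G}}}\zeta_{\mathrm{R}}^{N_{\mathrm{R}}}}.$$ In particular the mean fixation probability of a single $A$ at a uniformly random vertex is $$\rho_A=\frac{1-\frac1N\left(N_{\mathrm{G}}\zeta_{\mathrm{G}}+N_{\mathrm{R}}\zeta_{\mathrm{R}}\right)}{1-\zeta_{\mathrm{G}}^{N_{\mathrm{G}}}\zeta_{\mathrm{R}}^{N_{\mathrm{R}}}}.$$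
   Context: States are $\mathbf{x}\in\{0,1\}^N$, with $x_i=1$ meaning vertex $i$ holds type $A$ and $x_i=0$ type $B$. The fitness of the occupant of vertex $j$ is $a_j$ if it is type $A$ and $b_j$ if type $B$, where $a_j=a_{\mathrm{G}},b_j=b_{\mathrm{G}}$ if $j$ is green and $a_j=a_{\mathrm{R}},b_j=b_{\mathrm{R}}$ if $j$ is red. Weighted Moran process: in each step, an ordered pair $(j,i)$ is chosen with probability proportional to $f_j w_{ji}$, where $f_j$ is the fitness of the occupant of $j$ (normalized by $\sum_{j,k}f_j w_{jk}$), and the occupant of $i$ is replaced by an offspring of the type of the occupant of $j$. $X_n$ denotes the state at time $n$. Fixation of $A$ means absorption in the all-ones state. *)

theory Defs
  imports "HOL-Analysis.Analysis"
begin

text \<open>Vertices form a finite type 'v; a state is the set of vertices occupied by type A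
  (x_i = 1 iff i is in the set). Green vertices form the set G, red ones its complement.\<close>

definition fitness :: "'v set \<Rightarrow> real \<Rightarrow> real \<Rightarrow> real \<Rightarrow> real \<Rightarrow> 'v set \<Rightarrow> 'v \<Rightarrow> real" where
  "fitness G aG aR bG bR x j =
     (if j \<in> x then (if j \<in> G then aG else aR) else (if j \<in> G then bG else bR))"

definition total_weight :: "'v::finite set \<Rightarrow> ('v \<Rightarrow> 'v \<Rightarrow> real) \<Rightarrow> real \<Rightarrow> real \<Rightarrow> real \<Rightarrow> real \<Rightarrow> 'v set \<Rightarrow> real" where
  "total_weight G w aG aR bG bR x = (\<Sum>j\<in>UNIV. \<Sum>k\<in>UNIV. fitness G aG aR bG bR x j * w j k)"

definition replace_step :: "'v set \<Rightarrow> 'v \<Rightarrow> 'v \<Rightarrow> 'v set" where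
  "replace_step x j i = (if j \<in> x then insert i x else x - {i})"

definition moran_trans :: "'v::finite set \<Rightarrow> ('v \<Rightarrow> 'v \<Rightarrow> real) \<Rightarrow> real \<Rightarrow> real \<Rightarrow> real \<Rightarrow> real
    \<Rightarrow> 'v set \<Rightarrow> 'v set \<Rightarrow> real" where
  "moran_trans G w aG aR bG bR x y =
     (\<Sum>(j, i) \<in> {(j, i). replace_step x j i = y}.
        fitness G aG aR bG bR x j * w j i / total_weight G w aG aR bG bR x)"

fun moran_nstep :: "'v::finite set \<Rightarrow> ('v \<Rightarrow> 'v \<Rightarrow> real) \<Rightarrow> real \<Rightarrow> real \<Rightarrow> real \<Rightarrow> real
    \<Rightarrow> nat \<Rightarrow> 'v set \<Rightarrow> 'v set \<Rightarrow> real" where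
  "moran_nstep G w aG aR bG bR 0 x y = (if x = y then 1 else 0)"
| "moran_nstep G w aG aR bG bR (Suc n) x y =
     (\<Sum>z\<in>UNIV. moran_nstep G w aG aR bG bR n x z * moran_trans G w aG aR bG bR z y)"

definition zetaG :: "real \<Rightarrow> real \<Rightarrow> real \<Rightarrow> real \<Rightarrow> real \<Rightarrow> real \<Rightarrow> real \<Rightarrow> real \<Rightarrow> real" where
  "zetaG aG aR bG bR winG woutG winR woutR =
     (bR * winG * (aR * woutR + bG * winR)) / (aR * woutR * (aG * woutG + bR * winG))"

definition zetaR :: "real \<Rightarrow> real \<Rightarrow> real \<Rightarrow> real \<Rightarrow> real \<Rightarrow> real \<Rightarrow> real \<Rightarrow> real \<Rightarrow> real" where
  "zetaR aG aR bG bR winG woutG winR woutR =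
     (bG * winR * (aG * woutG + bR * winG)) / (aG * woutG * (aR * woutR + bG * winR))"

end

theory Submission
  imports Defs
begin

(* With Phi(x) = prod_{i in x} zeta_i, an A at j replacing a B at i multiplies Phi by zeta_i and
   a B at j replacing an A at i divides it by zeta_i.  All edges join a green and a red vertex and
   w_rg = (winG / woutG) w_gr, so the expected change of Phi splits into contributions of the edge
   pairs g -> r, r -> g, and zeta_G, zeta_R are exactly the values making every such contribution
   vanish: Phi(X_n) is a martingale.  By strong connectivity the chain is absorbed in the empty
   or the full state geometrically fast, so letting n -> oo in E Phi(X_n) = Phi(x) gives
   rho_A(x) Phi(full) + (1 - rho_A(x)) Phi(empty) = Phi(x), where Phi(empty) = 1. *)

section \<open>Absorption in finite Markov chains\<close>

fun trans_pow :: "('a::finite \<Rightarrow> 'a \<Rightarrow> real) \<Rightarrow> nat \<Rightarrow> 'a \<Rightarrow> 'a \<Rightarrow> real" where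
  "trans_pow P 0 x y = of_bool (x = y)"
| "trans_pow P (Suc n) x y = (\<Sum>z\<in>UNIV. trans_pow P n x z * P z y)"

lemma trans_pow_add:
  "trans_pow P (n + m) x y = (\<Sum>z\<in>UNIV. trans_pow P n x z * trans_pow P m z y)"
proof (induction m arbitrary: y)
  case 0
  show ?case by simp
next
  case (Suc m)
  have "trans_pow P (n + Suc m) x y
      = (\<Sum>v\<in>UNIV. (\<Sum>z\<in>UNIV. trans_pow P n x z * trans_pow P m z v) * P v y)"
    by (simp add: Suc)
  also have "\<dots> = (\<Sum>z\<in>UNIV. trans_pow P n x z * (\<Sum>v\<in>UNIV. trans_pow P m z v * P v y))"
    by (simp add: sum_distrib_left sum_distrib_right mult.assoc) (rule sum.swap)
  finally show ?case by simp
qed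

lemma trans_pow_Suc_left: "trans_pow P (Suc n) x y = (\<Sum>z\<in>UNIV. P x z * trans_pow P n z y)"
  using trans_pow_add[of P 1 n x y] by simp

lemma trans_pow_harmonic:
  assumes "\<And>x. (\<Sum>y\<in>UNIV. P x y * h y) = h x"
  shows "(\<Sum>y\<in>UNIV. trans_pow P n x y * h y) = h x"
proof (induction n)
  case 0
  show ?case by simp
next
  case (Suc n)
  have "(\<Sum>y\<in>UNIV. trans_pow P (Suc n) x y * h y)
      = (\<Sum>z\<in>UNIV. trans_pow P n x z * (\<Sum>y\<in>UNIV. P z y * h y))"
    by (simp add: sum_distrib_left sum_distrib_right mult.assoc) (rule sum.swap)
  also have "\<dots> = h x" using Suc assms by simp
  finally show ?case .
qed

locale stochastic_matrix =
  fixes P :: "'a::finite \<Rightarrow> 'a \<Rightarrow> real"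
  assumes nonneg: "\<And>x y. P x y \<ge> 0"
    and row_sum: "\<And>x. (\<Sum>y\<in>UNIV. P x y) = 1"
begin

lemma trans_pow_nonneg: "trans_pow P n x y \<ge> 0"
  by (induction n arbitrary: y) (auto intro!: sum_nonneg simp: nonneg)

lemma trans_pow_row_sum: "(\<Sum>y\<in>UNIV. trans_pow P n x y) = 1"
  using trans_pow_harmonic[of P "\<lambda>_. 1"] row_sum by simp

lemma absorbing_row_zero:
  assumes "P a a = 1" "y \<noteq> a"
  shows "P a y = 0"
proof -
  have "(\<Sum>y\<in>UNIV. P a y) = P a a + (\<Sum>y\<in>UNIV - {a}. P a y)"
    by (rule sum.remove) auto
  then have "(\<Sum>y\<in>UNIV - {a}. P a y) = 0"
    using row_sum assms(1) by simp
  then show ?thesis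
    using assms(2) by (simp add: sum_nonneg_eq_0_iff nonneg)
qed

lemma trans_pow_absorbing:
  assumes "P a a = 1"
  shows "trans_pow P n a y = of_bool (y = a)"
proof (induction n arbitrary: y)
  case (Suc n)
  then show ?case
    using absorbing_row_zero[OF assms, of y] assms by (cases "y = a") simp_all
qed simp

lemma trans_pow_absorbing_incseq:
  assumes "P a a = 1"
  shows "incseq (\<lambda>n. trans_pow P n x a)"
proof (rule incseq_SucI)
  fix n
  have "trans_pow P n x a * P a a \<le> (\<Sum>z\<in>UNIV. trans_pow P n x z * P z a)"
    by (rule member_le_sum) (auto intro!: mult_nonneg_nonneg trans_pow_nonneg nonneg)
  then show "trans_pow P n x a \<le> trans_pow P (Suc n) x a"
    using assms by simp
qed

definition mass_outside :: "'a set \<Rightarrow> nat \<Rightarrow> 'a \<Rightarrow> real" where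
  "mass_outside A n x = (\<Sum>y\<in>-A. trans_pow P n x y)"

lemma mass_outside_nonneg: "mass_outside A n x \<ge> 0"
  unfolding mass_outside_def by (intro sum_nonneg trans_pow_nonneg)

lemma mass_outside_eq: "mass_outside A n x = 1 - (\<Sum>y\<in>A. trans_pow P n x y)"
  using sum.subset_diff[of A UNIV "trans_pow P n x"] trans_pow_row_sum[of n x]
  by (simp add: mass_outside_def Compl_eq_Diff_UNIV)

lemma mass_outside_le_1: "mass_outside A n x \<le> 1"
  using sum_nonneg[of A "trans_pow P n x"] by (simp add: mass_outside_eq trans_pow_nonneg)

lemma mass_outside_add:
  assumes "\<And>a. a \<in> A \<Longrightarrow> P a a = 1"
  shows "mass_outside A (n + m) x = (\<Sum>y\<in>-A. trans_pow P n x y * mass_outside A m y)"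
proof -
  have "mass_outside A (n + m) x = (\<Sum>y\<in>UNIV. trans_pow P n x y * mass_outside A m y)"
    unfolding mass_outside_def trans_pow_add by (simp add: sum_distrib_left) (rule sum.swap)
  also have "\<dots> = (\<Sum>y\<in>-A. trans_pow P n x y * mass_outside A m y)"
    using assms by (intro sum.mono_neutral_right) (auto simp: mass_outside_def trans_pow_absorbing)
  finally show ?thesis .
qed

lemma mass_outside_tendsto_0:
  assumes absorbing: "\<And>a. a \<in> A \<Longrightarrow> P a a = 1"
    and escape: "\<And>y. mass_outside A K y < 1"
  shows "(\<lambda>n. mass_outside A n x) \<longlonglongrightarrow> 0"
proof -
  define q where "q = Max (range (mass_outside A K))"
  have q_ge: "mass_outside A K y \<le> q" for y
    unfolding q_def by (rule Max_ge) auto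
  have "q < 1"
    unfolding q_def using escape by (subst Max_less_iff) auto
  have "q \<ge> 0"
    using q_ge mass_outside_nonneg order_trans by blast
  have contract: "mass_outside A (n + K) x \<le> q * mass_outside A n x" for n
  proof -
    have "mass_outside A (n + K) x = (\<Sum>y\<in>-A. trans_pow P n x y * mass_outside A K y)"
      using absorbing by (rule mass_outside_add)
    also have "\<dots> \<le> (\<Sum>y\<in>-A. trans_pow P n x y * q)"
      by (intro sum_mono mult_left_mono trans_pow_nonneg q_ge)
    finally show ?thesis by (simp add: mass_outside_def sum_distrib_left mult.commute)
  qed
  have "decseq (\<lambda>n. mass_outside A n x)"
  proof (rule decseq_SucI)
    fix n
    have "mass_outside A (n + 1) x = (\<Sum>y\<in>-A. trans_pow P n x y * mass_outside A 1 y)"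
      using absorbing by (rule mass_outside_add)
    also have "\<dots> \<le> (\<Sum>y\<in>-A. trans_pow P n x y * 1)"
      by (intro sum_mono mult_left_mono trans_pow_nonneg mass_outside_le_1)
    finally show "mass_outside A (Suc n) x \<le> mass_outside A n x"
      by (simp add: mass_outside_def)
  qed
  then obtain L where L: "(\<lambda>n. mass_outside A n x) \<longlonglongrightarrow> L"
    using decseq_convergent mass_outside_nonneg by metis
  have "L \<ge> 0"
    using L by (rule LIMSEQ_le_const) (simp add: mass_outside_nonneg)
  moreover have "L \<le> q * L"
    using LIMSEQ_ignore_initial_segment[OF L, of K] tendsto_mult_left[OF L, of q]
    by (rule LIMSEQ_le) (simp add: contract)
  then have "(1 - q) * L \<le> 0"
    by (simp add: algebra_simps)
  ultimately have "L = 0"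
    using \<open>q < 1\<close> by (auto simp: mult_le_0_iff)
  then show ?thesis using L by simp
qed

lemma weighted_mass_outside_tendsto_0:
  assumes "(\<lambda>n. mass_outside A n x) \<longlonglongrightarrow> 0"
  shows "(\<lambda>n. \<Sum>y\<in>-A. trans_pow P n x y * h y) \<longlonglongrightarrow> 0"
proof (rule Lim_null_comparison)
  define M where "M = (\<Sum>y\<in>UNIV. \<bar>h y\<bar>)"
  have "\<bar>\<Sum>y\<in>-A. trans_pow P n x y * h y\<bar> \<le> (\<Sum>y\<in>-A. \<bar>trans_pow P n x y * h y\<bar>)" for n
    by (rule sum_abs)
  also have "\<dots> n \<le> (\<Sum>y\<in>-A. trans_pow P n x y * M)" for n
    unfolding M_def
    by (intro sum_mono) (auto simp: abs_mult trans_pow_nonneg intro!: mult_left_mono member_le_sum)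
  also have "\<dots> n = M * mass_outside A n x" for n
    by (simp add: mass_outside_def sum_distrib_left mult.commute)
  finally show "\<forall>\<^sub>F n in sequentially.
      norm (\<Sum>y\<in>-A. trans_pow P n x y * h y) \<le> M * mass_outside A n x"
    by simp
  show "(\<lambda>n. M * mass_outside A n x) \<longlonglongrightarrow> 0"
    using tendsto_mult_right_zero[OF assms] .
qed

lemma trans_pow_tendsto_harmonic:
  assumes absorbing: "P a a = 1" "P b b = 1" and "a \<noteq> b"
    and escape: "\<And>y. trans_pow P K y a + trans_pow P K y b > 0"
    and harmonic: "\<And>x. (\<Sum>y\<in>UNIV. P x y * h y) = h x" and "h a \<noteq> h b"
  shows "(\<lambda>n. trans_pow P n x a) \<longlonglongrightarrow> (h x - h b) / (h a - h b)"
proof -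
  define T where "T n = mass_outside {a, b} n x" for n
  define S where "S n = (\<Sum>y\<in>-{a, b}. trans_pow P n x y * h y)" for n
  have "mass_outside {a, b} K y < 1" for y
    using escape[of y] \<open>a \<noteq> b\<close> by (simp add: mass_outside_eq)
  then have T: "T \<longlonglongrightarrow> 0"
    unfolding T_def using absorbing by (intro mass_outside_tendsto_0) auto
  then have S: "S \<longlonglongrightarrow> 0"
    unfolding T_def S_def by (rule weighted_mass_outside_tendsto_0)
  have "trans_pow P n x a * (h a - h b) = h x - h b + h b * T n - S n" for n
  proof -
    have "h x = trans_pow P n x a * h a + trans_pow P n x b * h b + S n"
      using trans_pow_harmonic[OF harmonic, of n x] \<open>a \<noteq> b\<close>
        sum.subset_diff[of "{a, b}" UNIV "\<lambda>y. trans_pow P n x y * h y"]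
      by (simp add: S_def Compl_eq_Diff_UNIV)
    moreover have "trans_pow P n x b = 1 - T n - trans_pow P n x a"
      using \<open>a \<noteq> b\<close> by (simp add: T_def mass_outside_eq)
    ultimately show ?thesis by (simp add: algebra_simps)
  qed
  then have "trans_pow P n x a = (h x - h b + h b * T n - S n) / (h a - h b)" for n
    using \<open>h a \<noteq> h b\<close> by (simp add: eq_divide_eq)
  moreover have "(\<lambda>n. (h x - h b + h b * T n - S n) / (h a - h b))
      \<longlonglongrightarrow> (h x - h b + h b * 0 - 0) / (h a - h b)"
    by (intro tendsto_intros T S) (use \<open>h a \<noteq> h b\<close> in simp)
  ultimately show ?thesis by simp
qed

end

section \<open>The weighted Moran process\<close>

lemma moran_nstep_eq_trans_pow:
  "moran_nstep G w aG aR bG bR n x y = trans_pow (moran_trans G w aG aR bG bR) n x y"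
  by (induction n arbitrary: y) simp_all

lemma sum_moran_trans:
  "(\<Sum>y\<in>UNIV. moran_trans G w aG aR bG bR x y * h y)
     = (\<Sum>j\<in>UNIV. \<Sum>i\<in>UNIV. fitness G aG aR bG bR x j * w j i * h (replace_step x j i))
       / total_weight G w aG aR bG bR x"
proof -
  let ?r = "\<lambda>(j, i). fitness G aG aR bG bR x j * w j i / total_weight G w aG aR bG bR x"
  have "(\<Sum>y\<in>UNIV. moran_trans G w aG aR bG bR x y * h y)
      = (\<Sum>y\<in>UNIV. \<Sum>p\<in>{p \<in> UNIV. case_prod (replace_step x) p = y}.
           ?r p * h (case_prod (replace_step x) p))"
    unfolding moran_trans_def sum_distrib_right
    by (intro sum.cong refl) (auto simp: split_def)
  also have "\<dots> = (\<Sum>p\<in>UNIV \<times> UNIV. ?r p * h (case_prod (replace_step x) p))"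
    unfolding UNIV_Times_UNIV by (rule sum.group) auto
  also have "\<dots> = (\<Sum>j\<in>UNIV. \<Sum>i\<in>UNIV. fitness G aG aR bG bR x j * w j i * h (replace_step x j i))
       / total_weight G w aG aR bG bR x"
    unfolding sum.cartesian_product' sum_divide_distrib by (simp add: algebra_simps)
  finally show ?thesis .
qed

section \<open>The martingale on bipartite balanced graphs\<close>

context
  fixes aG aR bG bR winG woutG winR woutR :: real
  assumes pos: "aG > 0" "aR > 0" "bG > 0" "bR > 0" "winG > 0" "woutG > 0" "winR > 0" "woutR > 0"
begin

lemma zetaG_minus_1:
  "zetaG aG aR bG bR winG woutG winR woutR - 1
     = (bG * bR * winG * winR - aG * aR * woutG * woutR) / (aR * woutR * (aG * woutG + bR * winG))"
  using pos by (simp add: zetaG_def field_simps add_pos_pos less_imp_neq[symmetric])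

lemma zetaR_minus_1:
  "zetaR aG aR bG bR winG woutG winR woutR - 1
     = (bG * bR * winG * winR - aG * aR * woutG * woutR) / (aG * woutG * (aR * woutR + bG * winR))"
  using pos by (simp add: zetaR_def field_simps add_pos_pos less_imp_neq[symmetric])

lemma inverse_zetaG_minus_1:
  "1 / zetaG aG aR bG bR winG woutG winR woutR - 1
     = - (bG * bR * winG * winR - aG * aR * woutG * woutR) / (bR * winG * (aR * woutR + bG * winR))"
  using pos by (simp add: zetaG_def field_simps add_pos_pos less_imp_neq[symmetric])

lemma inverse_zetaR_minus_1:
  "1 / zetaR aG aR bG bR winG woutG winR woutR - 1
     = - (bG * bR * winG * winR - aG * aR * woutG * woutR) / (bG * winR * (aG * woutG + bR * winG))"
  using pos by (simp add: zetaR_def field_simps add_pos_pos less_imp_neq[symmetric])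

lemma zeta_edge_balance_green:
  "aG * (zetaR aG aR bG bR winG woutG winR woutR - 1)
     + bR * (winG / woutG) * (1 / zetaG aG aR bG bR winG woutG winR woutR - 1) = 0"
  using pos
  by (simp add: zetaR_minus_1 inverse_zetaG_minus_1 field_simps add_pos_pos less_imp_neq[symmetric])

lemma zeta_edge_balance_red:
  assumes "woutG * woutR = winG * winR"
  shows "aR * (winG / woutG) * (zetaG aG aR bG bR winG woutG winR woutR - 1)
     + bG * (1 / zetaR aG aR bG bR winG woutG winR woutR - 1) = 0"
  using pos assms
  by (simp add: zetaG_minus_1 inverse_zetaR_minus_1 field_simps add_pos_pos less_imp_neq[symmetric])

end

locale weighted_moran =
  fixes G :: "'v::finite set" and w :: "'v \<Rightarrow> 'v \<Rightarrow> real" and aG aR bG bR :: real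
  assumes w_nonneg: "\<And>i j. w i j \<ge> 0"
    and strongly_connected: "\<And>i j. (i, j) \<in> {(i, j). w i j > 0}\<^sup>*"
    and out_degree_pos: "\<And>j. (\<Sum>i\<in>UNIV. w j i) > 0"
    and fit_pos: "aG > 0" "aR > 0" "bG > 0" "bR > 0"
begin

abbreviation "f \<equiv> fitness G aG aR bG bR"
abbreviation "W \<equiv> total_weight G w aG aR bG bR"
abbreviation "P \<equiv> moran_trans G w aG aR bG bR"

lemma fitness_pos: "f x j > 0"
  using fit_pos by (simp add: fitness_def)

lemma total_weight_pos: "W x > 0"
proof -
  have "W x = (\<Sum>j\<in>UNIV. f x j * (\<Sum>i\<in>UNIV. w j i))"
    by (simp add: total_weight_def sum_distrib_left)
  also have "\<dots> > 0"
    by (intro sum_pos mult_pos_pos fitness_pos out_degree_pos) auto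
  finally show ?thesis .
qed

lemma moran_trans_eq:
  "P x y = (\<Sum>j\<in>UNIV. \<Sum>i\<in>UNIV. f x j * w j i * of_bool (replace_step x j i = y)) / W x"
  using sum_moran_trans[of G w aG aR bG bR x "\<lambda>v. of_bool (v = y)"] by simp

lemma moran_trans_nonneg: "P x y \<ge> 0"
  unfolding moran_trans_eq
  by (intro divide_nonneg_pos sum_nonneg mult_nonneg_nonneg less_imp_le[OF fitness_pos]
      w_nonneg total_weight_pos) simp

lemma moran_trans_row_sum: "(\<Sum>y\<in>UNIV. P x y) = 1"
  using sum_moran_trans[of G w aG aR bG bR x "\<lambda>_. 1"] total_weight_pos[of x]
  by (simp add: total_weight_def)

sublocale stochastic_matrix P
  by unfold_locales (fact moran_trans_nonneg, fact moran_trans_row_sum)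

lemma moran_trans_absorbing:
  assumes "x = {} \<or> x = UNIV"
  shows "P x x = 1"
proof -
  have "replace_step x j i = x" for j i
    using assms by (auto simp: replace_step_def)
  then show ?thesis
    using total_weight_pos[of x] by (simp add: moran_trans_eq total_weight_def)
qed

lemma boundary_edge:
  assumes "j \<in> x" "i \<notin> x"
  obtains j' i' where "j' \<in> x" "i' \<notin> x" "w j' i' > 0"
  using strongly_connected[of j i] assms
  by (induction rule: rtrancl_induct) (auto intro: that)

lemma moran_trans_insert_pos:
  assumes "j \<in> x" "i \<notin> x" "w j i > 0"
  shows "P x (insert i x) > 0"
proof -
  let ?t = "\<lambda>j i'. f x j * w j i' * of_bool (replace_step x j i' = insert i x)"
  have fw_nonneg: "f x j' * w j' i' \<ge> 0" for j' i'
    using fitness_pos[of x j'] w_nonneg[of j' i'] by simp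
  have "0 < ?t j i"
    using assms fitness_pos[of x j] by (simp add: replace_step_def)
  also have "\<dots> \<le> (\<Sum>i'\<in>UNIV. ?t j i')"
    by (rule member_le_sum) (simp_all add: fw_nonneg)
  also have "\<dots> \<le> (\<Sum>j'\<in>UNIV. \<Sum>i'\<in>UNIV. ?t j' i')"
    by (rule member_le_sum) (auto intro!: sum_nonneg simp: fw_nonneg)
  finally show ?thesis
    using total_weight_pos[of x] by (simp add: moran_trans_eq)
qed

lemma trans_pow_UNIV_pos:
  assumes "x \<noteq> {}"
  shows "trans_pow P (card (- x)) x UNIV > 0"
  using assms
proof (induction "card (- x)" arbitrary: x)
  case 0
  then have "x = UNIV"
    by (metis card_0_eq finite double_complement Compl_empty_eq)
  then show ?case by simp
next
  case (Suc k)
  obtain i0 j0 where "j0 \<in> x" "i0 \<notin> x"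
    using Suc.hyps(2) Suc.prems by (metis card.empty ComplD ex_in_conv nat.distinct(1))
  then obtain i j where "j \<in> x" "i \<notin> x" "w j i > 0"
    by (rule boundary_edge)
  have "card (- insert i x) = k"
    using Suc.hyps(2) \<open>i \<notin> x\<close> by (simp add: Compl_insert card_Diff_singleton)
  then have "trans_pow P k (insert i x) UNIV > 0"
    using Suc.hyps(1) by blast
  then have "0 < P x (insert i x) * trans_pow P k (insert i x) UNIV"
    using moran_trans_insert_pos[OF \<open>j \<in> x\<close> \<open>i \<notin> x\<close> \<open>w j i > 0\<close>] by simp
  also have "\<dots> \<le> (\<Sum>z\<in>UNIV. P x z * trans_pow P k z UNIV)"
    by (rule member_le_sum) (auto intro: mult_nonneg_nonneg moran_trans_nonneg trans_pow_nonneg)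
  also have "\<dots> = trans_pow P (Suc k) x UNIV"
    by (rule trans_pow_Suc_left[symmetric])
  finally show ?case
    by (metis Suc.hyps(2))
qed

lemma moran_nstep_tendsto_harmonic:
  assumes harmonic: "\<And>x. (\<Sum>y\<in>UNIV. P x y * h y) = h x" and "h UNIV \<noteq> h {}"
  shows "(\<lambda>n. moran_nstep G w aG aR bG bR n x UNIV) \<longlonglongrightarrow> (h x - h {}) / (h UNIV - h {})"
proof -
  have "trans_pow P CARD('v) y UNIV + trans_pow P CARD('v) y {} > 0" for y
  proof (cases "y = {}")
    case True
    then show ?thesis
      using trans_pow_absorbing[OF moran_trans_absorbing] trans_pow_nonneg
      by (simp add: add_nonneg_pos)
  next
    case False
    have "card (- y) \<le> CARD('v)"
      by (rule card_mono) auto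
    then have "trans_pow P (card (- y)) y UNIV \<le> trans_pow P CARD('v) y UNIV"
      using trans_pow_absorbing_incseq[OF moran_trans_absorbing] by (auto dest: incseqD)
    then show ?thesis
      using trans_pow_UNIV_pos[OF False] trans_pow_nonneg[of "CARD('v)" y "{}"] by linarith
  qed
  then show ?thesis
    unfolding moran_nstep_eq_trans_pow
    using moran_trans_absorbing harmonic \<open>h UNIV \<noteq> h {}\<close>
    by (intro trans_pow_tendsto_harmonic) auto
qed

end

locale bipartite_moran =
  fixes G :: "'v::finite set" and w :: "'v \<Rightarrow> 'v \<Rightarrow> real"
    and aG aR bG bR winG woutG winR woutR :: real
  assumes w_nonneg: "\<And>i j. w i j \<ge> 0"
    and strongly_connected: "\<And>i j. (i, j) \<in> {(i, j). w i j > 0}\<^sup>*"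
    and same_color: "\<And>i j. (i \<in> G \<longleftrightarrow> j \<in> G) \<Longrightarrow> w i j = 0"
    and in_G: "\<And>i. i \<in> G \<Longrightarrow> (\<Sum>j\<in>UNIV. w j i) = winG"
    and out_G: "\<And>i. i \<in> G \<Longrightarrow> (\<Sum>j\<in>UNIV. w i j) = woutG"
    and in_R: "\<And>i. i \<notin> G \<Longrightarrow> (\<Sum>j\<in>UNIV. w j i) = winR"
    and out_R: "\<And>i. i \<notin> G \<Longrightarrow> (\<Sum>j\<in>UNIV. w i j) = woutR"
    and deg_pos: "winG > 0" "woutG > 0" "winR > 0" "woutR > 0"
    and balance: "\<And>i j. i \<in> G \<Longrightarrow> j \<notin> G \<Longrightarrow> w j i = winG / woutG * w i j"
    and fit_pos: "aG > 0" "aR > 0" "bG > 0" "bR > 0"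
begin

sublocale weighted_moran G w aG aR bG bR
proof
  show "(\<Sum>i\<in>UNIV. w j i) > 0" for j
    using out_G[of j] out_R[of j] deg_pos by (cases "j \<in> G") simp_all
qed (fact w_nonneg strongly_connected fit_pos)+

abbreviation "zG \<equiv> zetaG aG aR bG bR winG woutG winR woutR"
abbreviation "zR \<equiv> zetaR aG aR bG bR winG woutG winR woutR"

definition zeta :: "'v \<Rightarrow> real" where
  "zeta i = (if i \<in> G then zG else zR)"

definition Phi :: "'v set \<Rightarrow> real" where
  "Phi x = (\<Prod>i\<in>x. zeta i)"

definition Phi_factor :: "'v set \<Rightarrow> 'v \<Rightarrow> 'v \<Rightarrow> real" where
  "Phi_factor x j i = (if j \<in> x \<and> i \<notin> x then zeta i else if j \<notin> x \<and> i \<in> x then 1 / zeta i else 1)"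

lemma zeta_pos: "zeta i > 0"
  using fit_pos deg_pos by (simp add: zeta_def zetaG_def zetaR_def add_pos_pos)

lemma Phi_replace_step: "Phi (replace_step x j i) = Phi x * Phi_factor x j i"
proof (cases "j \<in> x \<longleftrightarrow> i \<in> x")
  case True
  then have "replace_step x j i = x"
    by (auto simp: replace_step_def)
  then show ?thesis
    using True by (simp add: Phi_factor_def)
next
  case False
  then show ?thesis
    using zeta_pos[of i]
    by (auto simp: Phi_def Phi_factor_def replace_step_def prod.remove[of x i] mult.commute)
qed

lemma degree_product: "woutG * woutR = winG * winR"
proof -
  obtain r where "r \<notin> G"
  proof -
    have "(\<Sum>j\<in>UNIV. w i j) \<noteq> 0" if "i \<in> G" for i
      using out_G[OF that] deg_pos by simp
    then show thesis
      using same_color that by force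
  qed
  have "w r j = winG / woutG * w j r" for j
    using balance[of j r] same_color[of r j] same_color[of j r] \<open>r \<notin> G\<close> by (cases "j \<in> G") auto
  then have "woutR = (\<Sum>j\<in>UNIV. winG / woutG * w j r)"
    using out_R[OF \<open>r \<notin> G\<close>] by simp
  also have "\<dots> = winG / woutG * winR"
    using in_R[OF \<open>r \<notin> G\<close>] by (simp only: sum_distrib_left[symmetric])
  finally show ?thesis
    using deg_pos by (simp add: field_simps)
qed

lemma green_red_drift:
  assumes "g \<in> G" "r \<notin> G"
  shows "f x g * w g r * (Phi_factor x g r - 1) + f x r * w r g * (Phi_factor x r g - 1) = 0"
proof -
  have "f x g * w g r * (Phi_factor x g r - 1) + f x r * w r g * (Phi_factor x r g - 1)
      = w g r * (if g \<in> x \<and> r \<notin> x then aG * (zR - 1) + bR * (winG / woutG) * (1 / zG - 1)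
                 else if g \<notin> x \<and> r \<in> x then aR * (winG / woutG) * (zG - 1) + bG * (1 / zR - 1)
                 else 0)"
    using assms balance[OF assms] by (simp add: fitness_def Phi_factor_def zeta_def algebra_simps)
  then show ?thesis
    using zeta_edge_balance_green[OF fit_pos deg_pos]
      zeta_edge_balance_red[OF fit_pos deg_pos degree_product] by simp
qed

lemma edge_pair_drift:
  "f x j * w j i * (Phi_factor x j i - 1) + f x i * w i j * (Phi_factor x i j - 1) = 0"
proof (cases "j \<in> G \<longleftrightarrow> i \<in> G")
  case True
  then show ?thesis
    using same_color[of j i] same_color[of i j] by simp
next
  case False
  then show ?thesis
    using green_red_drift[of j i x] green_red_drift[of i j x] by (cases "j \<in> G") simp_all
qed

lemma total_drift_zero: "(\<Sum>j\<in>UNIV. \<Sum>i\<in>UNIV. f x j * w j i * (Phi_factor x j i - 1)) = 0"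
proof -
  let ?d = "\<lambda>j i. f x j * w j i * (Phi_factor x j i - 1)"
  have "2 * (\<Sum>j\<in>UNIV. \<Sum>i\<in>UNIV. ?d j i) = (\<Sum>j\<in>UNIV. \<Sum>i\<in>UNIV. ?d j i) + (\<Sum>i\<in>UNIV. \<Sum>j\<in>UNIV. ?d j i)"
    using sum.swap[of ?d UNIV UNIV] by simp
  also have "\<dots> = (\<Sum>j\<in>UNIV. \<Sum>i\<in>UNIV. ?d j i + ?d i j)"
    by (simp add: sum.distrib)
  also have "\<dots> = 0"
    by (simp add: edge_pair_drift)
  finally show ?thesis by simp
qed

lemma Phi_martingale: "(\<Sum>y\<in>UNIV. P x y * Phi y) = Phi x"
proof -
  have "(\<Sum>y\<in>UNIV. P x y * Phi y)
      = (\<Sum>j\<in>UNIV. \<Sum>i\<in>UNIV. f x j * w j i * (Phi x * Phi_factor x j i)) / W x"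
    by (simp add: sum_moran_trans Phi_replace_step)
  also have "\<dots> = Phi x * (W x + (\<Sum>j\<in>UNIV. \<Sum>i\<in>UNIV. f x j * w j i * (Phi_factor x j i - 1))) / W x"
    unfolding total_weight_def sum.distrib[symmetric] sum_distrib_left
    by (simp add: algebra_simps)
  also have "\<dots> = Phi x"
    using total_weight_pos[of x] by (simp add: total_drift_zero)
  finally show ?thesis .
qed

lemma Phi_UNIV: "Phi UNIV = zG ^ card G * zR ^ card (UNIV - G)"
  by (simp add: Phi_def zeta_def prod.If_cases Compl_eq_Diff_UNIV)

lemma fixation_probability:
  assumes "Phi UNIV \<noteq> 1"
  shows "(\<lambda>n. moran_nstep G w aG aR bG bR n x UNIV) \<longlonglongrightarrow> (1 - Phi x) / (1 - Phi UNIV)"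
proof -
  have "(\<lambda>n. moran_nstep G w aG aR bG bR n x UNIV) \<longlonglongrightarrow> (Phi x - Phi {}) / (Phi UNIV - Phi {})"
    using assms by (intro moran_nstep_tendsto_harmonic Phi_martingale) (simp add: Phi_def)
  also have "(Phi x - Phi {}) / (Phi UNIV - Phi {}) = (1 - Phi x) / (1 - Phi UNIV)"
    by (simp add: Phi_def) (metis minus_diff_eq minus_divide_divide)
  finally show ?thesis .
qed

lemma mean_fixation_probability:
  assumes "Phi UNIV \<noteq> 1"
  shows "(\<lambda>n. 1 / CARD('v) * (\<Sum>i\<in>UNIV. moran_nstep G w aG aR bG bR n {i} UNIV))
    \<longlonglongrightarrow> (1 - 1 / CARD('v) * (card G * zG + card (UNIV - G) * zR)) / (1 - Phi UNIV)"
proof -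
  have zeta_sum: "(\<Sum>i\<in>UNIV. zeta i) = card G * zG + card (UNIV - G) * zR"
    by (simp add: zeta_def sum.If_cases Compl_eq_Diff_UNIV)
  have "(\<lambda>n. 1 / CARD('v) * (\<Sum>i\<in>UNIV. moran_nstep G w aG aR bG bR n {i} UNIV))
      \<longlonglongrightarrow> 1 / CARD('v) * (\<Sum>i\<in>UNIV. (1 - zeta i) / (1 - Phi UNIV))"
    using fixation_probability[OF assms, of "{_}"]
    by (intro tendsto_mult_left tendsto_sum) (simp add: Phi_def)
  also have "1 / CARD('v) * (\<Sum>i\<in>UNIV. (1 - zeta i) / (1 - Phi UNIV))
      = (1 - 1 / CARD('v) * (card G * zG + card (UNIV - G) * zR)) / (1 - Phi UNIV)"
    using zeta_sum by (simp add: sum_subtractf field_simps flip: sum_divide_distrib)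
  finally show ?thesis .
qed

end

theorem mainTheorem3:
  fixes G :: "'v::finite set" and w :: "'v \<Rightarrow> 'v \<Rightarrow> real"
    and aG aR bG bR winG woutG winR woutR :: real
  assumes w_nonneg: "\<And>i j. w i j \<ge> 0"
    and w_diag: "\<And>i. w i i = 0"
    and strongly_connected: "\<And>i j. (i, j) \<in> {(i, j). w i j > 0}\<^sup>*"
    and same_color: "\<And>i j. (i \<in> G \<longleftrightarrow> j \<in> G) \<Longrightarrow> w i j = 0"
    and in_G: "\<And>i. i \<in> G \<Longrightarrow> (\<Sum>j\<in>UNIV. w j i) = winG"
    and out_G: "\<And>i. i \<in> G \<Longrightarrow> (\<Sum>j\<in>UNIV. w i j) = woutG"
    and in_R: "\<And>i. i \<notin> G \<Longrightarrow> (\<Sum>j\<in>UNIV. w j i) = winR"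
    and out_R: "\<And>i. i \<notin> G \<Longrightarrow> (\<Sum>j\<in>UNIV. w i j) = woutR"
    and deg_pos: "winG > 0" "woutG > 0" "winR > 0" "woutR > 0"
    and balance: "\<And>i j. i \<in> G \<Longrightarrow> j \<notin> G \<Longrightarrow> w j i = winG / woutG * w i j"
    and fit_pos: "aG > 0" "aR > 0" "bG > 0" "bR > 0"
  defines "zG \<equiv> zetaG aG aR bG bR winG woutG winR woutR"
    and "zR \<equiv> zetaR aG aR bG bR winG woutG winR woutR"
    and "NG \<equiv> card G" and "NR \<equiv> card (UNIV - G)" and "N \<equiv> CARD('v)"
  defines "Phi \<equiv> (\<lambda>x::'v set. \<Prod>i\<in>x. if i \<in> G then zG else zR)"
  shows "(\<forall>x. (\<Sum>y\<in>UNIV. moran_trans G w aG aR bG bR x y * Phi y) = Phi x)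
     \<and> (zG ^ NG * zR ^ NR \<noteq> 1 \<longrightarrow>
          (\<forall>x. (\<lambda>n. moran_nstep G w aG aR bG bR n x UNIV)
                 \<longlonglongrightarrow> (1 - Phi x) / (1 - zG ^ NG * zR ^ NR))
        \<and> (\<lambda>n. (1 / real N) * (\<Sum>i\<in>UNIV. moran_nstep G w aG aR bG bR n {i} UNIV))
             \<longlonglongrightarrow> (1 - (1 / real N) * (real NG * zG + real NR * zR)) / (1 - zG ^ NG * zR ^ NR))"
proof -
  interpret M: bipartite_moran G w aG aR bG bR winG woutG winR woutR
    using w_nonneg strongly_connected same_color in_G out_G in_R out_R deg_pos balance fit_pos
    by unfold_locales
  have "Phi = M.Phi"
    unfolding Phi_def zG_def zR_def M.Phi_def M.zeta_def ..
  moreover have "zG ^ NG * zR ^ NR = M.Phi UNIV"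
    unfolding M.Phi_UNIV zG_def zR_def NG_def NR_def ..
  ultimately show ?thesis
    using M.Phi_martingale M.fixation_probability M.mean_fixation_probability
    unfolding zG_def zR_def NG_def NR_def N_def by simp
qed

end
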